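(* Let $0\le k<\infty$, let $M$ be a $C^k$ manifold, $\mathbb F\in\{\mathbb R,\mathbb C\}$, and let $f\in C^k(M,\mathbb F)$ with $f(x_0)=0$ for some $x_0\in M$. Then there exists $h\in C^k(M,\mathbb F)$ with $Z(h)=\{x_0\}$ such that $f^{4k+4}$ is divisible by $h$ in $C^k(M,\mathbb F)$, i.e. there exists $q\in C^k(M,\mathbb F)$ with $f^{4k+4}=hq$.
   Context: Manifolds are Hausdorff and second countable. $Z(h)=\{x\in M:h(x)=0\}$. *)

theory Defs
  imports "HOL-Analysis.Analysis"
begin

fun Ck_on :: "nat \<Rightarrow> 'e::euclidean_space set \<Rightarrow> ('e \<Rightarrow> 'b::real_normed_vector) \<Rightarrow> bool" where
  "Ck_on 0 U f = continuous_on U f"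
| "Ck_on (Suc k) U f =
     ((\<forall>x\<in>U. f differentiable (at x)) \<and>
      (\<forall>i\<in>Basis. Ck_on k U (\<lambda>x. frechet_derivative f (at x) i)))"

definition chart :: "'m topology \<Rightarrow> 'm set \<Rightarrow> ('m \<Rightarrow> 'e::euclidean_space) \<Rightarrow> bool" where
  "chart X U \<phi> \<longleftrightarrow> openin X U \<and> open (\<phi> ` U) \<and>
     homeomorphic_map (subtopology X U) (top_of_set (\<phi> ` U)) \<phi>"

definition Ck_atlas :: "nat \<Rightarrow> 'm topology \<Rightarrow> ('m set \<times> ('m \<Rightarrow> 'e::euclidean_space)) set \<Rightarrow> bool" where
  "Ck_atlas k X A \<longleftrightarrow>
     (\<forall>(U, \<phi>)\<in>A. chart X U \<phi>) \<and>
     (\<Union>(U, \<phi>)\<in>A. U) = topspace X \<and>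
     (\<forall>(U, \<phi>)\<in>A. \<forall>(V, \<psi>)\<in>A.
        Ck_on k (\<phi> ` (U \<inter> V)) (\<psi> \<circ> inv_into U \<phi>))"

definition Ck_manifold :: "nat \<Rightarrow> 'm topology \<Rightarrow> ('m set \<times> ('m \<Rightarrow> 'e::euclidean_space)) set \<Rightarrow> bool" where
  "Ck_manifold k X A \<longleftrightarrow> Hausdorff_space X \<and> second_countable X \<and> Ck_atlas k X A"

definition Ck_fun :: "nat \<Rightarrow> 'm topology \<Rightarrow> ('m set \<times> ('m \<Rightarrow> 'e::euclidean_space)) set
     \<Rightarrow> ('m \<Rightarrow> 'b::real_normed_vector) \<Rightarrow> bool" where
  "Ck_fun k X A f \<longleftrightarrow> (\<forall>(U, \<phi>)\<in>A. Ck_on k (\<phi> ` U) (f \<circ> inv_into U \<phi>))"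

definition zero_set :: "'m topology \<Rightarrow> ('m \<Rightarrow> 'b::zero) \<Rightarrow> 'm set" where
  "zero_set X h = {x \<in> topspace X. h x = 0}"

end

theory Submission
  imports Defs
begin

text \<open>
  Let s be a real C^k function on the manifold vanishing exactly at x0,
  obtained by transporting a radial "dip" function through a chart around x0.  Put
     h = |f|^2 + s^2  and  q = f^N / h   (q = 0 at x0, the only zero of h).  Both h and q are compositions of the C^k map (f, s)
  with a function on the Euclidean space F x R: h with w |-> |w|^2, and q with
  R(w) = (fst w)^N / |w|^2.  The function R is a quotient P/|w|^(2m) of a homogeneous
  polynomial P of degree e; such a quotient is C^k on the whole space as soon as
  e >= 2m + k + 1: it is smooth off the origin, it is O(|w|^(e-2m)) at the origin, and
  each of its partial derivatives is again such a quotient whose excess e - 2m is one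
  smaller.  Hence any exponent N >= k + 3 works, in particular N = 4k + 4.
\<close>

section \<open>Calculus of C^k maps on open sets\<close>

lemma Ck_on_Suc_has_derivative:
  "Ck_on (Suc k) U f \<Longrightarrow> x \<in> U \<Longrightarrow> (f has_derivative frechet_derivative f (at x)) (at x)"
  by (simp add: frechet_derivative_works[symmetric])

lemma Ck_on_cong:
  assumes "open U" "\<And>x. x \<in> U \<Longrightarrow> f x = g x" "Ck_on k U f"
  shows "Ck_on k U g"
  using assms(2,3)
proof (induction k arbitrary: f g)
  case 0
  then show ?case using continuous_on_cong by fastforce
next
  case (Suc k)
  have deriv: "(g has_derivative frechet_derivative f (at x)) (at x)" if "x \<in> U" for x
    using has_derivative_transform_within_open[OF Ck_on_Suc_has_derivative[OF Suc.prems(2) that]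
        \<open>open U\<close> that] Suc.prems(1) by blast
  then have "frechet_derivative g (at x) = frechet_derivative f (at x)" if "x \<in> U" for x
    using frechet_derivative_at[OF deriv[OF that]] by simp
  then show ?case
    using Suc.prems deriv by (auto simp: differentiable_def intro: Suc.IH[rotated])
qed

lemma Ck_on_SucI:
  assumes "open U"
    and deriv: "\<And>x. x \<in> U \<Longrightarrow> (f has_derivative D x) (at x)"
    and partials: "\<And>i. i \<in> Basis \<Longrightarrow> Ck_on k U (\<lambda>x. D x i)"
  shows "Ck_on (Suc k) U f"
proof -
  have "frechet_derivative f (at x) = D x" if "x \<in> U" for x
    using frechet_derivative_at[OF deriv[OF that]] by simp
  then have "Ck_on k U (\<lambda>x. frechet_derivative f (at x) i)" if "i \<in> Basis" for i
    using Ck_on_cong[OF \<open>open U\<close> _ partials[OF that]] by simp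
  moreover have "f differentiable (at x)" if "x \<in> U" for x
    using deriv[OF that] by (rule differentiableI)
  ultimately show ?thesis by simp
qed

lemma Ck_on_Suc_imp_Ck_on: "Ck_on (Suc k) U f \<Longrightarrow> Ck_on k U f"
proof (induction k arbitrary: f)
  case 0
  then have "\<forall>x\<in>U. isCont f x"
    by (auto intro: differentiable_imp_continuous_within)
  then show ?case by (simp add: continuous_at_imp_continuous_on)
next
  case (Suc k)
  then show ?case by simp
qed

lemma Ck_on_local:
  assumes "\<And>x. x \<in> S \<Longrightarrow> \<exists>W. open W \<and> x \<in> W \<and> W \<subseteq> S \<and> Ck_on k W f"
  shows "Ck_on k S f"
  using assms
proof (induction k arbitrary: f)
  case 0
  have "continuous (at x within S) f" if "x \<in> S" for x
  proof -
    obtain W where "open W" "x \<in> W" "continuous_on W f" using 0 \<open>x \<in> S\<close> by force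
    then show ?thesis
      using continuous_on_eq_continuous_at continuous_at_imp_continuous_within by blast
  qed
  then show ?case by (simp add: continuous_on_eq_continuous_within)
next
  case (Suc k)
  have "f differentiable (at x)" if "x \<in> S" for x
    using Suc.prems that by force
  moreover have "Ck_on k S (\<lambda>x. frechet_derivative f (at x) i)" if "i \<in> Basis" for i
    by (rule Suc.IH) (use Suc.prems that in \<open>metis Ck_on.simps(2)\<close>)
  ultimately show ?case by simp
qed

lemma Ck_on_const: "Ck_on k U (\<lambda>x. c)"
proof (induction k arbitrary: c)
  case 0
  then show ?case by simp
next
  case (Suc k)
  have "frechet_derivative (\<lambda>x. c) (at x) = (\<lambda>h. 0)" for x
    using frechet_derivative_at[OF has_derivative_const] by simp
  then show ?case using Suc by simp
qed

lemma Ck_on_id: "Ck_on k U (\<lambda>x. x)"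
proof (cases k)
  case 0
  then show ?thesis by simp
next
  case (Suc n)
  have "frechet_derivative (\<lambda>x. x) (at x) = (\<lambda>h. h)" for x :: 'a
    using frechet_derivative_at[OF has_derivative_ident] by simp
  then show ?thesis using Suc by (simp add: Ck_on_const)
qed

lemma Ck_on_add:
  assumes "open U" "Ck_on k U f" "Ck_on k U g"
  shows "Ck_on k U (\<lambda>x. f x + g x)"
  using assms(2,3)
proof (induction k arbitrary: f g)
  case 0
  then show ?case by (simp add: continuous_on_add)
next
  case (Suc k)
  show ?case
  proof (rule Ck_on_SucI[OF \<open>open U\<close>,
        where D = "\<lambda>x v. frechet_derivative f (at x) v + frechet_derivative g (at x) v"])
    show "((\<lambda>x. f x + g x) has_derivative
        (\<lambda>v. frechet_derivative f (at x) v + frechet_derivative g (at x) v)) (at x)" if "x \<in> U" for x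
      using Suc.prems that by (intro has_derivative_add Ck_on_Suc_has_derivative)
    show "Ck_on k U (\<lambda>x. frechet_derivative f (at x) i + frechet_derivative g (at x) i)"
      if "i \<in> Basis" for i
      using Suc that by simp
  qed
qed

lemma Ck_on_sum:
  assumes "open U" "finite I" "\<And>j. j \<in> I \<Longrightarrow> Ck_on k U (f j)"
  shows "Ck_on k U (\<lambda>x. \<Sum>j\<in>I. f j x)"
  using assms(2,3)
proof (induction I rule: finite_induct)
  case empty
  then show ?case by (simp add: Ck_on_const)
next
  case (insert a F)
  then show ?case by (simp add: Ck_on_add[OF assms(1)])
qed

lemma Ck_on_linear:
  assumes "bounded_linear L" "open U" "Ck_on k U f"
  shows "Ck_on k U (\<lambda>x. L (f x))"
  using assms(3)
proof (induction k arbitrary: f)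
  case 0
  then show ?case using assms(1) by (simp add: bounded_linear.continuous_on)
next
  case (Suc k)
  show ?case
  proof (rule Ck_on_SucI[OF \<open>open U\<close>, where D = "\<lambda>x v. L (frechet_derivative f (at x) v)"])
    show "((\<lambda>x. L (f x)) has_derivative (\<lambda>v. L (frechet_derivative f (at x) v))) (at x)"
      if "x \<in> U" for x
      using Suc.prems that
      by (intro bounded_linear.has_derivative[OF assms(1)] Ck_on_Suc_has_derivative)
    show "Ck_on k U (\<lambda>x. L (frechet_derivative f (at x) i))" if "i \<in> Basis" for i
      using Suc that by simp
  qed
qed

lemma Ck_on_bilinear:
  assumes "bounded_bilinear mul" "open U" "Ck_on k U f" "Ck_on k U g"
  shows "Ck_on k U (\<lambda>x. mul (f x) (g x))"
  using assms(3,4)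
proof (induction k arbitrary: f g)
  case 0
  then show ?case using bounded_bilinear.continuous_on[OF assms(1)] by simp
next
  case (Suc k)
  show ?case
  proof (rule Ck_on_SucI[OF \<open>open U\<close>, where D = "\<lambda>x v.
        mul (f x) (frechet_derivative g (at x) v) + mul (frechet_derivative f (at x) v) (g x)"])
    show "((\<lambda>x. mul (f x) (g x)) has_derivative (\<lambda>v.
        mul (f x) (frechet_derivative g (at x) v) + mul (frechet_derivative f (at x) v) (g x))) (at x)"
      if "x \<in> U" for x
      using Suc.prems that
      by (intro bounded_bilinear.FDERIV[OF assms(1)] Ck_on_Suc_has_derivative)
    show "Ck_on k U (\<lambda>x.
        mul (f x) (frechet_derivative g (at x) i) + mul (frechet_derivative f (at x) i) (g x))"
      if "i \<in> Basis" for i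
      using Suc.prems that Ck_on_Suc_imp_Ck_on[OF Suc.prems(1)] Ck_on_Suc_imp_Ck_on[OF Suc.prems(2)]
      by (intro Ck_on_add[OF \<open>open U\<close>] Suc.IH) simp_all
  qed
qed

lemma Ck_on_pair:
  assumes "open U" "Ck_on k U f" "Ck_on k U g"
  shows "Ck_on k U (\<lambda>x. (f x, g x))"
  using assms(2,3)
proof (induction k arbitrary: f g)
  case 0
  then show ?case by (simp add: continuous_on_Pair)
next
  case (Suc k)
  show ?case
  proof (rule Ck_on_SucI[OF \<open>open U\<close>,
        where D = "\<lambda>x v. (frechet_derivative f (at x) v, frechet_derivative g (at x) v)"])
    show "((\<lambda>x. (f x, g x)) has_derivative
        (\<lambda>v. (frechet_derivative f (at x) v, frechet_derivative g (at x) v))) (at x)" if "x \<in> U" for x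
      using Suc.prems that by (intro has_derivative_Pair Ck_on_Suc_has_derivative)
    show "Ck_on k U (\<lambda>x. (frechet_derivative f (at x) i, frechet_derivative g (at x) i))"
      if "i \<in> Basis" for i
      using Suc that by simp
  qed
qed

(* Chain rule: a C^k map on the whole space composed with a C^k map is C^k.  The partial
   derivatives of the composite are expanded in the basis of the intermediate space. *)
lemma Ck_on_compose:
  fixes \<Phi> :: "'a::euclidean_space \<Rightarrow> 'c::real_normed_vector" and T :: "'e::euclidean_space \<Rightarrow> 'a"
  assumes "Ck_on k UNIV \<Phi>" "open U" "Ck_on k U T"
  shows "Ck_on k U (\<lambda>x. \<Phi> (T x))"
  using assms(1,3)
proof (induction k arbitrary: \<Phi> T)
  case 0
  then show ?case using continuous_on_compose2[of UNIV \<Phi> U T] by auto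
next
  case (Suc k)
  let ?dT = "\<lambda>x. frechet_derivative T (at x)" and ?d\<Phi> = "\<lambda>y. frechet_derivative \<Phi> (at y)"
  have expand: "?d\<Phi> (T x) (?dT x i) = (\<Sum>j\<in>Basis. (?dT x i \<bullet> j) *\<^sub>R ?d\<Phi> (T x) j)" for x i
  proof -
    have "linear (?d\<Phi> (T x))"
      using Suc.prems(1) by (intro linear_frechet_derivative) simp
    then show ?thesis
      by (subst euclidean_representation[symmetric, of "?dT x i"])
        (simp add: linear_sum linear_cmul o_def)
  qed
  show ?case
  proof (rule Ck_on_SucI[OF \<open>open U\<close>, where D = "\<lambda>x v. ?d\<Phi> (T x) (?dT x v)"])
    show "((\<lambda>x. \<Phi> (T x)) has_derivative (\<lambda>v. ?d\<Phi> (T x) (?dT x v))) (at x)" if "x \<in> U" for x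
      using diff_chain_at[OF Ck_on_Suc_has_derivative[OF Suc.prems(2) that]
          Ck_on_Suc_has_derivative[OF Suc.prems(1) UNIV_I]]
      by (simp add: o_def)
    show "Ck_on k U (\<lambda>x. ?d\<Phi> (T x) (?dT x i))" if "i \<in> Basis" for i
      unfolding expand
    proof (intro Ck_on_sum[OF \<open>open U\<close> finite_Basis]
        Ck_on_bilinear[OF bounded_bilinear_scaleR \<open>open U\<close>])
      fix j :: 'a assume "j \<in> Basis"
      show "Ck_on k U (\<lambda>x. ?dT x i \<bullet> j)"
        using Suc.prems(2) that by (intro Ck_on_linear[OF bounded_linear_inner_left \<open>open U\<close>]) simp
      show "Ck_on k U (\<lambda>x. ?d\<Phi> (T x) j)"
        using Suc.prems \<open>j \<in> Basis\<close> Ck_on_Suc_imp_Ck_on[OF Suc.prems(2)] by (intro Suc.IH) simp_all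
    qed
  qed
qed

section \<open>Homogeneous polynomial functions\<close>

inductive hom_poly :: "nat \<Rightarrow> ('a::euclidean_space \<Rightarrow> 'b::real_normed_field) \<Rightarrow> bool" where
  zero: "hom_poly n (\<lambda>x. 0)"
| const: "hom_poly 0 (\<lambda>x. c)"
| linear: "bounded_linear L \<Longrightarrow> hom_poly 1 L"
| norm_square: "hom_poly 2 (\<lambda>x. of_real (x \<bullet> x))"
| add: "hom_poly n P \<Longrightarrow> hom_poly n Q \<Longrightarrow> hom_poly n (\<lambda>x. P x + Q x)"
| mult: "hom_poly a P \<Longrightarrow> hom_poly b Q \<Longrightarrow> hom_poly (a + b) (\<lambda>x. P x * Q x)"

lemma hom_poly_power: "bounded_linear L \<Longrightarrow> hom_poly n (\<lambda>x. L x ^ n)"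
proof (induction n)
  case 0
  then show ?case using hom_poly.const[of 1] by simp
next
  case (Suc n)
  then show ?case using hom_poly.mult[OF hom_poly.linear[OF Suc.prems] Suc.IH[OF Suc.prems]] by simp
qed

lemma hom_poly_bound: "hom_poly e P \<Longrightarrow> \<exists>C\<ge>0. \<forall>x. norm (P x) \<le> C * norm x ^ e"
proof (induction rule: hom_poly.induct)
  case (zero n)
  then show ?case by auto
next
  case (const c)
  then show ?case by (intro exI[of _ "norm c"]) auto
next
  case (linear L)
  then obtain K where "K > 0" "\<And>x. norm (L x) \<le> norm x * K"
    using bounded_linear.pos_bounded by blast
  then show ?case by (intro exI[of _ K]) (auto simp: mult.commute)
next
  case norm_square
  show ?case by (intro exI[of _ 1]) (simp add: power2_norm_eq_inner[symmetric] norm_power)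
next
  case (add n P Q)
  then obtain C1 C2 where C: "C1 \<ge> 0" "C2 \<ge> 0"
    "\<forall>x. norm (P x) \<le> C1 * norm x ^ n" "\<forall>x. norm (Q x) \<le> C2 * norm x ^ n"
    by blast
  have "norm (P x + Q x) \<le> (C1 + C2) * norm x ^ n" for x
  proof -
    have "norm (P x + Q x) \<le> norm (P x) + norm (Q x)" by (rule norm_triangle_ineq)
    also have "\<dots> \<le> C1 * norm x ^ n + C2 * norm x ^ n" using C by (intro add_mono) auto
    finally show ?thesis by (simp add: distrib_right)
  qed
  then show ?case using C by (intro exI[of _ "C1 + C2"]) auto
next
  case (mult a P b Q)
  then obtain C1 C2 where C: "C1 \<ge> 0" "C2 \<ge> 0"
    "\<forall>x. norm (P x) \<le> C1 * norm x ^ a" "\<forall>x. norm (Q x) \<le> C2 * norm x ^ b"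
    by blast
  have "norm (P x * Q x) \<le> (C1 * norm x ^ a) * (C2 * norm x ^ b)" for x
    unfolding norm_mult using C by (intro mult_mono) auto
  then have "norm (P x * Q x) \<le> (C1 * C2) * norm x ^ (a + b)" for x
    by (simp add: power_add mult_ac)
  then show ?case using C by (intro exI[of _ "C1 * C2"]) auto
qed

lemma hom_poly_differentiable: "hom_poly e P \<Longrightarrow> P differentiable (at x)"
proof (induction rule: hom_poly.induct)
  case (linear L)
  then show ?case using bounded_linear_imp_differentiable by blast
next
  case norm_square
  have "((\<lambda>x::'a. of_real (x \<bullet> x)::'b) has_derivative (\<lambda>h. of_real (x \<bullet> h + h \<bullet> x))) (at x)"
    by (intro bounded_linear.has_derivative[OF bounded_linear_of_real] has_derivative_inner
        has_derivative_ident)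
  then show ?case by (rule differentiableI)
qed auto

(* Degree bookkeeping for the product rule: if P', Q' are derivatives of P, Q of degrees
   one less (and vanish when the degree is 0), then (PQ)' = P Q' + P' Q has degree a + b - 1. *)
lemma hom_poly_product_rule_degree:
  assumes "hom_poly a P" "hom_poly b Q" "hom_poly (a - 1) P'" "hom_poly (b - 1) Q'"
    and "a = 0 \<Longrightarrow> P' = (\<lambda>x. 0)" "b = 0 \<Longrightarrow> Q' = (\<lambda>x. 0)"
  shows "hom_poly (a + b - 1) (\<lambda>x. P x * Q' x + P' x * Q x)"
proof (cases "a = 0")
  case True
  then show ?thesis using hom_poly.mult[OF assms(1,4)] assms(5) by simp
next
  case a: False
  show ?thesis
  proof (cases "b = 0")
    case True
    then show ?thesis using a hom_poly.mult[OF assms(3,2)] assms(6) by simp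
  next
    case False
    then have "a + (b - 1) = a + b - 1" "a - 1 + b = a + b - 1" using a by auto
    then have "hom_poly (a + b - 1) (\<lambda>x. P x * Q' x)" "hom_poly (a + b - 1) (\<lambda>x. P' x * Q x)"
      using hom_poly.mult[OF assms(1,4)] hom_poly.mult[OF assms(3,2)] by simp_all
    then show ?thesis by (rule hom_poly.add)
  qed
qed

lemma hom_poly_partial:
  "hom_poly e P \<Longrightarrow> \<exists>P'. hom_poly (e - 1) P' \<and> (e = 0 \<longrightarrow> P' = (\<lambda>x. 0)) \<and>
      (\<forall>x. frechet_derivative P (at x) v = P' x)"
proof (induction rule: hom_poly.induct)
  case (zero n)
  have "frechet_derivative (\<lambda>x::'a. 0::'b) (at x) = (\<lambda>h. 0)" for x
    using frechet_derivative_at[OF has_derivative_const] by simp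
  then show ?case by (auto intro: hom_poly.zero)
next
  case (const c)
  have "frechet_derivative (\<lambda>x::'a. c) (at x) = (\<lambda>h. 0)" for x
    using frechet_derivative_at[OF has_derivative_const] by simp
  then show ?case by (auto intro: hom_poly.zero)
next
  case (linear L)
  then have "frechet_derivative L (at x) = L" for x
    using frechet_derivative_at[OF bounded_linear_imp_has_derivative] by metis
  then show ?case by (auto intro!: exI[of _ "\<lambda>x. L v"] hom_poly.const)
next
  case norm_square
  have deriv: "((\<lambda>x::'a. of_real (x \<bullet> x)::'b) has_derivative (\<lambda>h. of_real (x \<bullet> h + h \<bullet> x))) (at x)" for x
    by (intro bounded_linear.has_derivative[OF bounded_linear_of_real] has_derivative_inner
        has_derivative_ident)
  then have "frechet_derivative (\<lambda>x::'a. of_real (x \<bullet> x)::'b) (at x) = (\<lambda>h. of_real (x \<bullet> h + h \<bullet> x))"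
    for x
    using frechet_derivative_at[OF deriv] by simp
  then have "frechet_derivative (\<lambda>x::'a. of_real (x \<bullet> x)::'b) (at x) v = of_real 2 * of_real (x \<bullet> v)"
    for x
    by (simp add: inner_commute[of v x] of_real_add field_simps)
  moreover have "hom_poly (0 + 1) (\<lambda>x::'a. (of_real 2::'b) * of_real (x \<bullet> v))"
    by (intro hom_poly.mult hom_poly.const hom_poly.linear
        bounded_linear_compose[OF bounded_linear_of_real bounded_linear_inner_left])
  ultimately show ?case by auto
next
  case (add n P Q)
  then obtain P' Q' where "hom_poly (n - 1) P'" "hom_poly (n - 1) Q'"
    "n = 0 \<longrightarrow> P' = (\<lambda>x. 0)" "n = 0 \<longrightarrow> Q' = (\<lambda>x. 0)"
    "\<forall>x. frechet_derivative P (at x) v = P' x" "\<forall>x. frechet_derivative Q (at x) v = Q' x"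
    by blast
  moreover have "frechet_derivative (\<lambda>x. P x + Q x) (at x) v =
      frechet_derivative P (at x) v + frechet_derivative Q (at x) v" for x
    using add.hyps
    by (subst frechet_derivative_at[OF has_derivative_add, symmetric])
      (auto simp: frechet_derivative_works[symmetric] hom_poly_differentiable)
  ultimately show ?case
    by (intro exI[of _ "\<lambda>x. P' x + Q' x"]) (auto intro: hom_poly.add)
next
  case (mult a P b Q)
  then obtain P' Q' where P': "hom_poly (a - 1) P'" "a = 0 \<longrightarrow> P' = (\<lambda>x. 0)"
      "\<forall>x. frechet_derivative P (at x) v = P' x"
    and Q': "hom_poly (b - 1) Q'" "b = 0 \<longrightarrow> Q' = (\<lambda>x. 0)"
      "\<forall>x. frechet_derivative Q (at x) v = Q' x"
    by blast
  have "frechet_derivative (\<lambda>x. P x * Q x) (at x) v =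
      P x * frechet_derivative Q (at x) v + frechet_derivative P (at x) v * Q x" for x
    using mult.hyps
    by (subst frechet_derivative_at[OF has_derivative_mult, symmetric])
      (auto simp: frechet_derivative_works[symmetric] hom_poly_differentiable)
  then show ?case
    using hom_poly_product_rule_degree[OF mult.hyps P'(1) Q'(1)] P' Q'
    by (intro exI[of _ "\<lambda>x. P x * Q' x + P' x * Q x"]) auto
qed

lemma hom_poly_Ck: "hom_poly e P \<Longrightarrow> Ck_on k U P"
proof (induction k arbitrary: e P)
  case 0
  then have "\<forall>x\<in>U. isCont P x"
    using hom_poly_differentiable differentiable_imp_continuous_within by blast
  then show ?case by (simp add: continuous_at_imp_continuous_on)
next
  case (Suc k)
  have "Ck_on k U (\<lambda>x. frechet_derivative P (at x) i)" for i
    using hom_poly_partial[OF Suc.prems, of i] Suc.IH by auto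
  then show ?case using hom_poly_differentiable[OF Suc.prems] by simp
qed

section \<open>Quotients of homogeneous polynomials by powers of the squared norm\<close>

lemma isCont_zero_of_power_bound:
  fixes g :: "'a::real_normed_vector \<Rightarrow> 'b::real_normed_vector"
  assumes "g 0 = 0" "0 < n" "\<And>h. norm (g h) \<le> C * norm h ^ n"
  shows "isCont g 0"
proof -
  have "((\<lambda>h. norm h) \<longlongrightarrow> 0) (at (0::'a))"
    by (rule tendsto_norm_zero[OF tendsto_ident_at])
  then have "((\<lambda>h. C * norm h ^ n) \<longlongrightarrow> C * 0 ^ n) (at (0::'a))"
    by (intro tendsto_mult_left tendsto_power)
  then have lim: "((\<lambda>h. C * norm h ^ n) \<longlongrightarrow> 0) (at (0::'a))"
    using \<open>0 < n\<close> by (simp add: power_0_left)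
  have "(g \<longlongrightarrow> 0) (at 0)"
    by (rule Lim_null_comparison[OF _ lim]) (use assms(3) in \<open>simp add: always_eventually\<close>)
  then show ?thesis using assms(1) by (simp add: isCont_def)
qed

lemma has_derivative_zero_of_power_bound:
  fixes g :: "'a::real_normed_vector \<Rightarrow> 'b::real_normed_vector"
  assumes "g 0 = 0" "1 < n" "\<And>h. norm (g h) \<le> C * norm h ^ n"
  shows "(g has_derivative (\<lambda>h. 0)) (at 0)"
proof -
  obtain n' where n': "n = Suc n'" "0 < n'" using \<open>1 < n\<close> by (cases n) auto
  have bound: "norm (norm (g h) / norm h) \<le> C * norm h ^ n'" for h
  proof (cases "h = 0")
    case True
    then show ?thesis using n' by (simp add: power_0_left)
  next
    case False
    have "norm (g h) / norm h \<le> C * norm h ^ n / norm h"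
      using assms(3) by (intro divide_right_mono) auto
    then show ?thesis using False n'(1) by simp
  qed
  have "isCont (\<lambda>h. norm (g h) / norm h) 0"
    using isCont_zero_of_power_bound[of "\<lambda>h. norm (g h) / norm h", OF _ n'(2) bound] assms(1)
    by simp
  then have "((\<lambda>h. norm (g h) / norm h) \<longlongrightarrow> 0) (at 0)"
    by (simp add: isCont_def)
  then show ?thesis using assms(1) by (simp add: has_derivative_at)
qed

(* hom_quot m P x = P x / |x|^(2m), extended by 0 at the origin. *)
definition hom_quot :: "nat \<Rightarrow> ('a::euclidean_space \<Rightarrow> 'b::real_normed_field) \<Rightarrow> 'a \<Rightarrow> 'b" where
  "hom_quot m P x = P x / of_real ((x \<bullet> x) ^ m)"

lemma hom_quot_at_origin: "0 < m \<Longrightarrow> hom_quot m P 0 = 0"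
  by (simp add: hom_quot_def)

lemma hom_quot_bound:
  assumes "hom_poly e P" "2 * m \<le> e"
  shows "\<exists>C. \<forall>x. norm (hom_quot m P x) \<le> C * norm x ^ (e - 2 * m)"
proof -
  obtain C where C: "C \<ge> 0" "\<And>x. norm (P x) \<le> C * norm x ^ e"
    using hom_poly_bound[OF assms(1)] by blast
  have "norm (hom_quot m P x) \<le> C * norm x ^ (e - 2 * m)" for x
  proof (cases "x = 0")
    case True
    then show ?thesis using C(1) C(2)[of 0] by (cases "m = 0") (auto simp: hom_quot_def power_0_left)
  next
    case False
    have "norm (of_real ((x \<bullet> x) ^ m) :: 'b) = norm x ^ (2 * m)"
      by (simp only: norm_of_real) (simp add: power2_norm_eq_inner[symmetric] power_mult)
    then have "norm (hom_quot m P x) = norm (P x) / norm x ^ (2 * m)"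
      by (simp add: hom_quot_def norm_divide)
    also have "\<dots> \<le> C * norm x ^ e / norm x ^ (2 * m)"
      using C by (intro divide_right_mono) auto
    also have "\<dots> = C * norm x ^ (e - 2 * m)"
      using False assms(2) by (simp add: power_diff)
    finally show ?thesis .
  qed
  then show ?thesis by blast
qed

lemma hom_quot_isCont_zero:
  assumes "hom_poly e P" "0 < m" "2 * m + 1 \<le> e"
  shows "isCont (hom_quot m P) 0"
proof -
  obtain C where C: "\<And>x. norm (hom_quot m P x) \<le> C * norm x ^ (e - 2 * m)"
    using hom_quot_bound[OF assms(1), of m] assms(3) by auto
  show ?thesis
    by (rule isCont_zero_of_power_bound[OF hom_quot_at_origin[OF assms(2)] _ C]) (use assms(3) in simp)
qed

lemma hom_quot_has_derivative_zero:
  assumes "hom_poly e P" "0 < m" "2 * m + 2 \<le> e"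
  shows "(hom_quot m P has_derivative (\<lambda>h. 0)) (at 0)"
proof -
  obtain C where C: "\<And>x. norm (hom_quot m P x) \<le> C * norm x ^ (e - 2 * m)"
    using hom_quot_bound[OF assms(1), of m] assms(3) by auto
  show ?thesis
    by (rule has_derivative_zero_of_power_bound[OF hom_quot_at_origin[OF assms(2)] _ C]) (use assms(3) in simp)
qed

lemma hom_quot_has_derivative:
  assumes "hom_poly e P" "0 < m" "x \<noteq> 0"
  shows "(hom_quot m P has_derivative (\<lambda>v. (frechet_derivative P (at x) v * of_real (x \<bullet> x)
      - of_real (2 * real m) * of_real (x \<bullet> v) * P x) / of_real ((x \<bullet> x) ^ Suc m))) (at x)"
proof -
  have dP: "(P has_derivative frechet_derivative P (at x)) (at x)"
    using hom_poly_differentiable[OF assms(1)] frechet_derivative_works by blast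
  have "((\<lambda>y. (y \<bullet> y) ^ m) has_derivative
      (\<lambda>v. of_nat m * (x \<bullet> v + v \<bullet> x) * (x \<bullet> x) ^ (m - 1))) (at x)"
    by (intro has_derivative_power has_derivative_inner has_derivative_ident)
  then have dN: "((\<lambda>y. of_real ((y \<bullet> y) ^ m) :: 'b) has_derivative
      (\<lambda>v. of_real (of_nat m * (x \<bullet> v + v \<bullet> x) * (x \<bullet> x) ^ (m - 1)))) (at x)"
    by (rule bounded_linear.has_derivative[OF bounded_linear_of_real])
  have "(of_real ((x \<bullet> x) ^ m) :: 'b) \<noteq> 0" using assms(3) by simp
  from has_derivative_divide'[OF dP dN this]
  have "(hom_quot m P has_derivative (\<lambda>v. (frechet_derivative P (at x) v * of_real ((x \<bullet> x) ^ m)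
      - P x * of_real (of_nat m * (x \<bullet> v + v \<bullet> x) * (x \<bullet> x) ^ (m - 1))) /
      (of_real ((x \<bullet> x) ^ m) * of_real ((x \<bullet> x) ^ m)))) (at x)"
    unfolding hom_quot_def[abs_def] .
  moreover have "(frechet_derivative P (at x) v * of_real ((x \<bullet> x) ^ m)
      - P x * of_real (of_nat m * (x \<bullet> v + v \<bullet> x) * (x \<bullet> x) ^ (m - 1))) /
      (of_real ((x \<bullet> x) ^ m) * of_real ((x \<bullet> x) ^ m)) =
    (frechet_derivative P (at x) v * of_real (x \<bullet> x)
      - of_real (2 * real m) * of_real (x \<bullet> v) * P x) / of_real ((x \<bullet> x) ^ Suc m)" for v
  proof -
    obtain m' where m': "m = Suc m'" using assms(2) gr0_implies_Suc by blast
    define r :: 'b where "r = of_real (x \<bullet> x)"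
    have "r \<noteq> 0" using assms(3) by (simp add: r_def)
    then show ?thesis
      unfolding m' of_real_mult of_real_power of_real_add inner_commute[of v x] r_def[symmetric]
      by (simp add: field_simps)
  qed
  ultimately show ?thesis by simp
qed

(* Each partial derivative of P/|x|^(2m) is Q/|x|^(2m+2) with Q homogeneous of degree e + 1;
   at the origin the derivative vanishes because of the decay bound. *)
lemma hom_quot_partial:
  assumes P: "hom_poly e P" and "0 < m" "2 * m + 2 \<le> e"
  obtains Q where "hom_poly (e + 1) Q"
    "\<And>x. frechet_derivative (hom_quot m P) (at x) v = hom_quot (Suc m) Q x"
proof -
  obtain P' where P': "hom_poly (e - 1) P'" "\<And>x. frechet_derivative P (at x) v = P' x"
    using hom_poly_partial[OF P] by blast
  define Q where "Q x = P' x * of_real (x \<bullet> x) - of_real (2 * real m) * of_real (x \<bullet> v) * P x"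
    for x
  have "hom_poly (e - 1 + 2) (\<lambda>x. P' x * of_real (x \<bullet> x))"
    by (intro hom_poly.mult P' hom_poly.norm_square)
  moreover have "hom_poly (0 + 1 + e) (\<lambda>x. (- of_real (2 * real m)) * of_real (x \<bullet> v) * P x)"
    by (intro hom_poly.mult hom_poly.const hom_poly.linear P
        bounded_linear_compose[OF bounded_linear_of_real bounded_linear_inner_left])
  ultimately have "hom_poly (e + 1) Q"
    using hom_poly.add assms(3) unfolding Q_def by fastforce
  moreover have "frechet_derivative (hom_quot m P) (at x) v = hom_quot (Suc m) Q x" for x
  proof (cases "x = 0")
    case True
    then show ?thesis
      using frechet_derivative_at[OF hom_quot_has_derivative_zero[OF P assms(2,3)], symmetric]
      by (simp add: hom_quot_def)
  next
    case False
    then show ?thesis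
      using frechet_derivative_at[OF hom_quot_has_derivative[OF P assms(2) False], symmetric] P'(2)
      by (simp add: hom_quot_def Q_def)
  qed
  ultimately show ?thesis by (rule that)
qed

lemma hom_quot_Ck:
  "hom_poly e P \<Longrightarrow> 0 < m \<Longrightarrow> 2 * m + k + 1 \<le> e \<Longrightarrow> Ck_on k UNIV (hom_quot m P)"
proof (induction k arbitrary: e P m)
  case 0
  have "isCont (hom_quot m P) x" for x
  proof (cases "x = 0")
    case True
    then show ?thesis using hom_quot_isCont_zero[OF 0(1,2)] 0(3) by simp
  next
    case False
    then show ?thesis
      using hom_quot_has_derivative[OF 0(1,2) False] has_derivative_continuous by blast
  qed
  then show ?case by (simp add: continuous_at_imp_continuous_on)
next
  case (Suc k)
  have "hom_quot m P differentiable (at x)" for x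
  proof (cases "x = 0")
    case True
    then show ?thesis
      using hom_quot_has_derivative_zero[OF Suc.prems(1,2)] Suc.prems(3)
      by (auto simp: differentiable_def)
  next
    case False
    then show ?thesis
      using hom_quot_has_derivative[OF Suc.prems(1,2) False] by (auto simp: differentiable_def)
  qed
  moreover have "Ck_on k UNIV (\<lambda>x. frechet_derivative (hom_quot m P) (at x) i)" for i
  proof -
    obtain Q where "hom_poly (e + 1) Q"
      "\<And>x. frechet_derivative (hom_quot m P) (at x) i = hom_quot (Suc m) Q x"
      using hom_quot_partial[OF Suc.prems(1,2)] Suc.prems(3) by auto
    then show ?thesis using Suc.IH[of "e + 1" Q "Suc m"] Suc.prems(3) by simp
  qed
  ultimately show ?case by simp
qed

section \<open>A C^k dip function on Euclidean space\<close>

lemma ramp_power_has_derivative: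
  assumes "2 \<le> n"
  shows "((\<lambda>u::real. (max 0 u) ^ n) has_real_derivative (of_nat n * (max 0 u) ^ (n - 1))) (at u)"
proof -
  consider "u > 0" | "u < 0" | "u = 0" by linarith
  then show ?thesis
  proof cases
    case 1
    have "((\<lambda>u::real. u ^ n) has_real_derivative (of_nat n * u ^ (n - 1))) (at u)"
      using DERIV_pow[of n u UNIV] by simp
    then have "((\<lambda>u::real. (max 0 u) ^ n) has_real_derivative (of_nat n * u ^ (n - 1))) (at u)"
      by (rule has_field_derivative_transform_within_open[of _ _ _ "{0<..}"]) (use 1 in auto)
    then show ?thesis using 1 by simp
  next
    case 2
    have "((\<lambda>u::real. 0) has_real_derivative 0) (at u)" by simp
    then have "((\<lambda>u::real. (max 0 u) ^ n) has_real_derivative 0) (at u)"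
      by (rule has_field_derivative_transform_within_open[of _ _ _ "{..<0}"]) (use 2 assms in auto)
    then show ?thesis using 2 assms by (simp add: power_0_left)
  next
    case 3
    have "norm ((max 0 h) ^ n) \<le> 1 * norm h ^ n" for h :: real
    proof -
      have "\<bar>max 0 h\<bar> \<le> \<bar>h\<bar>" by auto
      then show ?thesis by (simp add: norm_power power_mono)
    qed
    from has_derivative_zero_of_power_bound[OF _ _ this]
    have "((\<lambda>u::real. (max 0 u) ^ n) has_derivative (\<lambda>h. 0)) (at 0)"
      using assms by simp
    moreover have "(\<lambda>h::real. 0) = (*) (of_nat n * (max 0 0) ^ (n - 1))"
      using assms by (auto simp: power_0_left)
    ultimately show ?thesis unfolding has_field_derivative_def 3 by (simp only:)
  qed
qed

(* Hence max(0,u)^(k+1) is C^k: its derivative is a multiple of max(0,u)^k. *)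
lemma ramp_power_Ck: "Ck_on k UNIV (\<lambda>u::real. (max 0 u) ^ Suc k)"
proof (induction k)
  case 0
  then show ?case by (simp add: continuous_on_max continuous_on_id)
next
  case (Suc k)
  let ?c = "of_nat (Suc (Suc k)) :: real"
  show ?case
  proof (rule Ck_on_SucI[OF open_UNIV, where D = "\<lambda>u. (*) (?c * (max 0 u) ^ Suc k)"])
    show "((\<lambda>u::real. (max 0 u) ^ Suc (Suc k)) has_derivative (*) (?c * (max 0 u) ^ Suc k)) (at u)"
      for u
      using ramp_power_has_derivative[of "Suc (Suc k)" u] by (simp add: has_field_derivative_def)
    show "Ck_on k UNIV (\<lambda>u. ?c * (max 0 u) ^ Suc k * i)" for i :: real
      by (intro Ck_on_bilinear[OF bounded_bilinear_mult open_UNIV] Ck_on_const Suc.IH)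
  qed
qed

definition dip :: "nat \<Rightarrow> 'e::euclidean_space \<Rightarrow> real \<Rightarrow> 'e \<Rightarrow> real" where
  "dip k p r y = 1 - (max 0 (1 - ((y - p) \<bullet> (y - p)) / r^2)) ^ Suc k"

lemma dip_Ck: "Ck_on k UNIV (dip k p r)"
proof -
  have shift: "Ck_on k UNIV (\<lambda>y. y - p)"
    unfolding diff_conv_add_uminus by (rule Ck_on_add[OF open_UNIV Ck_on_id Ck_on_const])
  have "Ck_on k UNIV (\<lambda>y. (y - p) \<bullet> (y - p))"
    by (rule Ck_on_bilinear[OF bounded_bilinear_inner open_UNIV shift shift])
  then have "Ck_on k UNIV (\<lambda>y. 1 + - inverse (r^2) * ((y - p) \<bullet> (y - p)))"
    by (intro Ck_on_add[OF open_UNIV Ck_on_const] Ck_on_linear[OF bounded_linear_mult_right open_UNIV])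
  then have "Ck_on k UNIV (\<lambda>y. 1 - ((y - p) \<bullet> (y - p)) / r^2)"
    by (simp add: divide_inverse mult.commute)
  from Ck_on_compose[OF ramp_power_Ck open_UNIV this]
  have "Ck_on k UNIV (\<lambda>y. 1 + - ((max 0 (1 - ((y - p) \<bullet> (y - p)) / r^2)) ^ Suc k))"
    by (intro Ck_on_add[OF open_UNIV Ck_on_const]
        Ck_on_linear[OF bounded_linear_minus[OF bounded_linear_ident] open_UNIV])
  then show ?thesis unfolding dip_def[abs_def] by simp
qed

lemma dip_centre: "dip k p r p = 0"
  by (simp add: dip_def)

lemma dip_outside: "0 < r \<Longrightarrow> r \<le> dist y p \<Longrightarrow> dip k p r y = 1"
proof -
  assume r: "0 < r" "r \<le> dist y p"
  then have "r^2 \<le> (y - p) \<bullet> (y - p)"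
    by (simp add: power2_norm_eq_inner[symmetric] dist_norm power_mono)
  then have "1 - ((y - p) \<bullet> (y - p)) / r^2 \<le> 0" using r by (simp add: field_simps)
  then show ?thesis by (simp add: dip_def max_def)
qed

lemma dip_nonzero: "0 < r \<Longrightarrow> y \<noteq> p \<Longrightarrow> dip k p r y \<noteq> 0"
proof -
  assume "0 < r" "y \<noteq> p"
  define u where "u = max 0 (1 - ((y - p) \<bullet> (y - p)) / r^2)"
  have "(y - p) \<bullet> (y - p) > 0" using \<open>y \<noteq> p\<close> by simp
  then have "0 \<le> u" "u < 1" using \<open>0 < r\<close> by (auto simp: u_def)
  then have "u ^ Suc k < 1" using power_strict_mono[of u 1 "Suc k"] by simp
  then show ?thesis by (simp add: dip_def u_def[symmetric])
qed

section \<open>Charts, gluing, and a function vanishing exactly at a point\<close>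

lemma Ck_atlas_chart: "Ck_atlas k X A \<Longrightarrow> (U, \<phi>) \<in> A \<Longrightarrow> chart X U \<phi>"
  by (auto simp: Ck_atlas_def)

lemma Ck_atlas_transition:
  "Ck_atlas k X A \<Longrightarrow> (U, \<phi>) \<in> A \<Longrightarrow> (V, \<psi>) \<in> A \<Longrightarrow>
    Ck_on k (\<phi> ` (U \<inter> V)) (\<psi> \<circ> inv_into U \<phi>)"
  unfolding Ck_atlas_def by fast

lemma chart_inj_on:
  assumes "chart X V \<psi>"
  shows "inj_on \<psi> V"
proof -
  have hm: "homeomorphic_map (subtopology X V) (top_of_set (\<psi> ` V)) \<psi>" and "openin X V"
    using assms by (auto simp: chart_def)
  then have "topspace (subtopology X V) = V" by (simp add: openin_subset Int_absorb1)
  then show ?thesis using homeomorphic_imp_injective_map[OF hm] by simp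
qed

lemma chart_inv_into_mem:
  assumes "chart X V \<psi>" "z \<in> S" "S \<subseteq> V"
  shows "inv_into V \<psi> (\<psi> z) \<in> S"
proof -
  have "inv_into V \<psi> (\<psi> z) = z"
    using assms by (intro inv_into_f_f chart_inj_on) auto
  then show ?thesis using assms(2) by simp
qed

lemma chart_open_image:
  assumes "chart X V \<psi>" "openin X S" "S \<subseteq> V"
  shows "open (\<psi> ` S)"
proof -
  have hm: "homeomorphic_map (subtopology X V) (top_of_set (\<psi> ` V)) \<psi>" and "open (\<psi> ` V)"
    using assms(1) by (auto simp: chart_def)
  have "openin (subtopology X V) S"
    using assms(2,3) by (auto simp: openin_subtopology intro!: exI[of _ S])
  then have "openin (top_of_set (\<psi> ` V)) (\<psi> ` S)"
    using homeomorphic_imp_open_map[OF hm] by (simp add: open_map_def)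
  then show ?thesis using \<open>open (\<psi> ` V)\<close> openin_open_trans by blast
qed

(* In a Hausdorff space, the part of a chart domain mapped into a closed ball contained
   in the chart image is compact, hence closed. *)
lemma chart_cball_preimage_closedin:
  assumes "Hausdorff_space X" "chart X U \<phi>" "cball p r \<subseteq> \<phi> ` U"
  shows "closedin X {x \<in> U. \<phi> x \<in> cball p r}"
proof -
  have oU: "openin X U" and hm: "homeomorphic_map (subtopology X U) (top_of_set (\<phi> ` U)) \<phi>"
    using assms(2) by (auto simp: chart_def)
  obtain g where g: "homeomorphic_maps (subtopology X U) (top_of_set (\<phi> ` U)) \<phi> g"
    using hm homeomorphic_map_maps by blast
  have UX: "U \<subseteq> topspace X" using oU by (simp add: openin_subset)
  have gc: "continuous_map (top_of_set (\<phi> ` U)) (subtopology X U) g"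
    and g\<phi>: "\<And>x. x \<in> U \<Longrightarrow> g (\<phi> x) = x" and \<phi>g: "\<And>y. y \<in> \<phi> ` U \<Longrightarrow> \<phi> (g y) = y"
    and gU: "\<And>y. y \<in> \<phi> ` U \<Longrightarrow> g y \<in> U"
    using g UX by (auto simp: homeomorphic_maps_def Int_absorb1 continuous_map_def)
  have "{x \<in> U. \<phi> x \<in> cball p r} = g ` cball p r"
  proof
    show "{x \<in> U. \<phi> x \<in> cball p r} \<subseteq> g ` cball p r"
      using g\<phi> by (metis (mono_tags, lifting) image_eqI mem_Collect_eq subsetI)
    show "g ` cball p r \<subseteq> {x \<in> U. \<phi> x \<in> cball p r}"
      using assms(3) \<phi>g gU by auto
  qed
  moreover have "compactin (top_of_set (\<phi> ` U)) (cball p r)"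
    using assms(3) by (simp add: compactin_subtopology)
  then have "compactin X (g ` cball p r)"
    using image_compactin[OF _ gc] by (simp add: compactin_subtopology)
  ultimately show ?thesis using compactin_imp_closedin[OF assms(1)] by simp
qed

lemma Ck_fun_from_local:
  assumes atlas: "Ck_atlas k X A"
    and local: "\<And>x. x \<in> topspace X \<Longrightarrow> \<exists>W. openin X W \<and> x \<in> W \<and>
        (\<forall>(V, \<psi>)\<in>A. Ck_on k (\<psi> ` (V \<inter> W)) (s \<circ> inv_into V \<psi>))"
  shows "Ck_fun k X A s"
  unfolding Ck_fun_def
proof (intro ballI, clarify)
  fix V \<psi> assume VA: "(V, \<psi>) \<in> A"
  then have ch: "chart X V \<psi>" by (rule Ck_atlas_chart[OF atlas])
  then have oV: "openin X V" by (simp add: chart_def)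
  show "Ck_on k (\<psi> ` V) (s \<circ> inv_into V \<psi>)"
  proof (rule Ck_on_local)
    fix y assume "y \<in> \<psi> ` V"
    then obtain x where x: "x \<in> V" "y = \<psi> x" by blast
    then obtain W where W: "openin X W" "x \<in> W" "Ck_on k (\<psi> ` (V \<inter> W)) (s \<circ> inv_into V \<psi>)"
      using local[of x] VA openin_subset[OF oV] by blast
    have "open (\<psi> ` (V \<inter> W))"
      using chart_open_image[OF ch] oV W(1) by blast
    then show "\<exists>W'. open W' \<and> y \<in> W' \<and> W' \<subseteq> \<psi> ` V \<and> Ck_on k W' (s \<circ> inv_into V \<psi>)"
      using W x by blast
  qed
qed

(* Every point of a C^k manifold is the exact zero set of a real C^k function: transport
   a dip function through a chart, and extend it by 1 outside the chart. *)
lemma Ck_fun_vanishing_exactly_at: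
  fixes A :: "('m set \<times> ('m \<Rightarrow> 'e::euclidean_space)) set"
  assumes M: "Ck_manifold k X A" and x0: "x0 \<in> topspace X"
  obtains s :: "'m \<Rightarrow> real" where "Ck_fun k X A s" "\<And>x. x \<in> topspace X \<Longrightarrow> s x = 0 \<longleftrightarrow> x = x0"
proof -
  have H: "Hausdorff_space X" and atlas: "Ck_atlas k X A"
    using M by (auto simp: Ck_manifold_def)
  have "x0 \<in> (\<Union>(U, \<phi>)\<in>A. U)" using atlas x0 by (simp add: Ck_atlas_def)
  then obtain U \<phi> where U: "(U, \<phi>) \<in> A" "x0 \<in> U" by fastforce
  have ch: "chart X U \<phi>" by (rule Ck_atlas_chart[OF atlas U(1)])
  then have oU: "openin X U" and "open (\<phi> ` U)" by (auto simp: chart_def)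
  then obtain r where r: "0 < r" "cball (\<phi> x0) r \<subseteq> \<phi> ` U"
    using U(2) open_contains_cball by blast
  define K where "K = {x \<in> U. \<phi> x \<in> cball (\<phi> x0) r}"
  have K: "closedin X K" unfolding K_def by (rule chart_cball_preimage_closedin[OF H ch r(2)])
  define s where "s x = (if x \<in> U then dip k (\<phi> x0) r (\<phi> x) else 1)" for x
  have "s x = 0 \<longleftrightarrow> x = x0" for x
  proof
    assume s0: "s x = 0"
    then have xU: "x \<in> U" by (auto simp: s_def split: if_splits)
    with s0 have "dip k (\<phi> x0) r (\<phi> x) = 0" by (simp add: s_def)
    then have "\<phi> x = \<phi> x0" using dip_nonzero[OF r(1)] by blast
    then show "x = x0" using inj_onD[OF chart_inj_on[OF ch] _ xU U(2)] by simp
  next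
    assume "x = x0"
    then show "s x = 0" using U(2) by (simp add: s_def dip_centre)
  qed
  moreover have "Ck_fun k X A s"
  proof (rule Ck_fun_from_local[OF atlas])
    fix x assume "x \<in> topspace X"
    show "\<exists>W. openin X W \<and> x \<in> W \<and> (\<forall>(V, \<psi>)\<in>A. Ck_on k (\<psi> ` (V \<inter> W)) (s \<circ> inv_into V \<psi>))"
    proof (cases "x \<in> U")
      case True
      have "Ck_on k (\<psi> ` (V \<inter> U)) (s \<circ> inv_into V \<psi>)" if VA: "(V, \<psi>) \<in> A" for V \<psi>
      proof (rule Ck_on_cong)
        have chV: "chart X V \<psi>" by (rule Ck_atlas_chart[OF atlas VA])
        show "open (\<psi> ` (V \<inter> U))"
          using chart_open_image[OF chV] oU chV by (auto simp: chart_def)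
        show "Ck_on k (\<psi> ` (V \<inter> U)) (\<lambda>y. dip k (\<phi> x0) r ((\<phi> \<circ> inv_into V \<psi>) y))"
          using Ck_on_compose[OF dip_Ck \<open>open (\<psi> ` (V \<inter> U))\<close>
              Ck_atlas_transition[OF atlas VA U(1)]] .
        show "dip k (\<phi> x0) r ((\<phi> \<circ> inv_into V \<psi>) y) = (s \<circ> inv_into V \<psi>) y"
          if "y \<in> \<psi> ` (V \<inter> U)" for y
          using that chart_inv_into_mem[OF chV, of _ "V \<inter> U"] by (auto simp: s_def)
      qed
      then show ?thesis using oU True by blast
    next
      case False
      have "Ck_on k (\<psi> ` (V \<inter> (topspace X - K))) (s \<circ> inv_into V \<psi>)" if VA: "(V, \<psi>) \<in> A" for V \<psi>
      proof (rule Ck_on_cong[OF _ _ Ck_on_const])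
        have chV: "chart X V \<psi>" by (rule Ck_atlas_chart[OF atlas VA])
        moreover have "openin X (V \<inter> (topspace X - K))"
          using K chV by (auto simp: chart_def intro!: openin_Int openin_diff)
        ultimately show "open (\<psi> ` (V \<inter> (topspace X - K)))"
          using chart_open_image by blast
        show "1 = (s \<circ> inv_into V \<psi>) y" if y: "y \<in> \<psi> ` (V \<inter> (topspace X - K))" for y
        proof -
          obtain z where z: "z \<in> V \<inter> (topspace X - K)" "y = \<psi> z" using y by blast
          then have "inv_into V \<psi> y = z" using chart_inj_on[OF chV] by simp
          moreover have "z \<in> U \<Longrightarrow> r \<le> dist (\<phi> z) (\<phi> x0)"
            using z(1) by (auto simp: K_def dist_commute)
          ultimately show ?thesis using dip_outside[OF r(1)] by (auto simp: s_def)
        qed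
      qed
      moreover have "x \<notin> K" using False by (simp add: K_def)
      ultimately show ?thesis using K \<open>x \<in> topspace X\<close> by blast
    qed
  qed
  ultimately show ?thesis using that by blast
qed

lemma Ck_fun_compose_pair:
  fixes f :: "'m \<Rightarrow> 'b::euclidean_space" and g :: "'m \<Rightarrow> 'c::euclidean_space"
    and \<Phi> :: "'b \<times> 'c \<Rightarrow> 'd::real_normed_vector"
  assumes atlas: "Ck_atlas k X A" and "Ck_fun k X A f" "Ck_fun k X A g" "Ck_on k UNIV \<Phi>"
  shows "Ck_fun k X A (\<lambda>x. \<Phi> (f x, g x))"
  unfolding Ck_fun_def
proof clarify
  fix U \<phi> assume UA: "(U, \<phi>) \<in> A"
  then have "open (\<phi> ` U)" using Ck_atlas_chart[OF atlas] by (simp add: chart_def)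
  moreover have "Ck_on k (\<phi> ` U) (\<lambda>y. (f (inv_into U \<phi> y), g (inv_into U \<phi> y)))"
    using assms(2,3) UA \<open>open (\<phi> ` U)\<close> by (intro Ck_on_pair) (auto simp: Ck_fun_def o_def)
  ultimately show "Ck_on k (\<phi> ` U) ((\<lambda>x. \<Phi> (f x, g x)) \<circ> inv_into U \<phi>)"
    using Ck_on_compose[OF assms(4)] by (simp add: o_def)
qed

theorem Ck_fun_power_divisible:
  fixes A :: "('m set \<times> ('m \<Rightarrow> 'e::euclidean_space)) set"
    and f :: "'m \<Rightarrow> 'b::{euclidean_space, real_normed_field}"
  assumes M: "Ck_manifold k X A" and x0: "x0 \<in> topspace X"
    and f: "Ck_fun k X A f" "f x0 = 0" and N: "k + 3 \<le> N"
  shows "\<exists>h q. Ck_fun k X A h \<and> zero_set X h = {x0} \<and> Ck_fun k X A q \<and>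
           (\<forall>x\<in>topspace X. f x ^ N = h x * q x)"
proof -
  have atlas: "Ck_atlas k X A" using M by (simp add: Ck_manifold_def)
  obtain s :: "'m \<Rightarrow> real" where s: "Ck_fun k X A s" "\<And>x. x \<in> topspace X \<Longrightarrow> s x = 0 \<longleftrightarrow> x = x0"
    using Ck_fun_vanishing_exactly_at[OF M x0] by blast
  define h where "h x = (of_real ((f x, s x) \<bullet> (f x, s x)) :: 'b)" for x
  define q where "q x = hom_quot 1 (\<lambda>w. fst w ^ N) (f x, s x)" for x
  have "Ck_fun k X A h"
    unfolding h_def by (rule Ck_fun_compose_pair[OF atlas f(1) s(1) hom_poly_Ck[OF hom_poly.norm_square]])
  moreover have "Ck_fun k X A q"
    unfolding q_def using N
    by (intro Ck_fun_compose_pair[OF atlas f(1) s(1)] hom_quot_Ck[OF hom_poly_power[OF bounded_linear_fst]])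
      auto
  moreover have h0: "h x = 0 \<longleftrightarrow> f x = 0 \<and> s x = 0" for x
    by (simp only: h_def of_real_eq_0_iff inner_eq_zero_iff) (simp add: zero_prod_def)
  then have "zero_set X h = {x0}"
    using s(2) x0 f(2) by (auto simp: zero_set_def)
  moreover have "f x ^ N = h x * q x" for x
  proof (cases "h x = 0")
    case True
    then show ?thesis using h0 N by (simp add: q_def hom_quot_def)
  next
    case False
    then show ?thesis by (simp add: h_def q_def hom_quot_def)
  qed
  ultimately show ?thesis by blast
qed

theorem lemma2p2:
  fixes k :: nat and X :: "'m topology" and A :: "('m set \<times> ('m \<Rightarrow> 'e::euclidean_space)) set"
    and x0 :: 'm
  assumes "Ck_manifold k X A"
    and "x0 \<in> topspace X"
  shows "(\<forall>f :: 'm \<Rightarrow> real. Ck_fun k X A f \<and> f x0 = 0 \<longrightarrow>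
            (\<exists>h q. Ck_fun k X A h \<and> zero_set X h = {x0} \<and> Ck_fun k X A q \<and>
                   (\<forall>x\<in>topspace X. f x ^ (4 * k + 4) = h x * q x)))
       \<and> (\<forall>f :: 'm \<Rightarrow> complex. Ck_fun k X A f \<and> f x0 = 0 \<longrightarrow>
            (\<exists>h q. Ck_fun k X A h \<and> zero_set X h = {x0} \<and> Ck_fun k X A q \<and>
                   (\<forall>x\<in>topspace X. f x ^ (4 * k + 4) = h x * q x)))"
proof -
  have exponent: "k + 3 \<le> 4 * k + 4" by simp
  show ?thesis
    using Ck_fun_power_divisible[where 'b = real, OF assms _ _ exponent]
      Ck_fun_power_divisible[where 'b = complex, OF assms _ _ exponent]
    by blast
qed

end
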